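(* Let $\lambda>0$, $\nu>0$ and $\mu\in\mathbb{R}$ be constants, and let $F$ be one of the functions $$F_1(t)=\frac{\arctan(\lambda t+\mu)-\arctan(\frac{\lambda t}{2}+\mu)}{\arctan(\frac{\lambda t}{2}+\mu)-\arctan(\frac{\lambda t}{4}+\mu)},\qquad F_2(t)=\frac{\frac{1}{t/2+\nu}-\frac{1}{t+\nu}}{\frac{1}{t/4+\nu}-\frac{1}{t/2+\nu}}.$$ Let $t>0$. If $F(t)\ge\frac32$, then $F(t/2)>\frac32$. *)

theory Defs
  imports Complex_Main
begin

definition F1 :: "real \<Rightarrow> real \<Rightarrow> real \<Rightarrow> real" where
  "F1 lam mu t = (arctan (lam * t + mu) - arctan (lam * t / 2 + mu)) /
                 (arctan (lam * t / 2 + mu) - arctan (lam * t / 4 + mu))"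

definition F2 :: "real \<Rightarrow> real \<Rightarrow> real" where
  "F2 nu t = (1 / (t / 2 + nu) - 1 / (t + nu)) /
             (1 / (t / 4 + nu) - 1 / (t / 2 + nu))"

end

theory Submission
  imports Defs
begin

text \<open>
  Write \<open>s = \<lambda>t/4\<close> and \<open>g(s) = arctan(\<mu> + 2s) - 3/2 arctan(\<mu> + s)\<close>. Then
  \<open>F\<^sub>1(t) \<ge> 3/2\<close> says \<open>g(s) \<le> g(2s)\<close>, and the claim is \<open>g(s/2) < g(s)\<close>.
  The derivative of \<open>g\<close> has the sign of \<open>P(s) = 1 + \<mu>\<^sup>2 - 4\<mu>s - 8s\<^sup>2\<close>,
  and \<open>P(s)/s\<close> is strictly decreasing on \<open>s > 0\<close>. If \<open>P(s) \<le> 0\<close>, then \<open>g\<close>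
  would be strictly decreasing on \<open>[s, 2s]\<close>; hence \<open>P(s) > 0\<close>, so \<open>g\<close> is strictly
  increasing on \<open>[s/2, s]\<close>. For \<open>F\<^sub>2\<close> everything is explicit:
  \<open>F\<^sub>2(t) = (t/2 + 2\<nu>)/(t + \<nu>)\<close>, and \<open>F\<^sub>2(t) \<ge> 3/2\<close> iff \<open>2t \<le> \<nu>\<close>.
\<close>

definition arctan_comb :: "real \<Rightarrow> real \<Rightarrow> real" where
  "arctan_comb mu s = arctan (mu + 2*s) - 3/2 * arctan (mu + s)"

definition arctan_comb_numer :: "real \<Rightarrow> real \<Rightarrow> real" where
  "arctan_comb_numer mu s = 1 + mu^2 - 4*mu*s - 8*s^2"

lemma arctan_comb_deriv:
  "(arctan_comb mu has_real_derivative
      arctan_comb_numer mu s / (2 * (1 + (mu + 2*s)^2) * (1 + (mu + s)^2))) (at s)"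
proof -
  define A where "A = 1 + (mu + 2*s)^2"
  define B where "B = 1 + (mu + s)^2"
  have "A > 0" "B > 0"
    unfolding A_def B_def by (simp_all add: add_pos_nonneg)
  then have "2 * inverse A - 3/2 * inverse B = (4*B - 3*A) / (2*A*B)"
    by (simp add: field_simps)
  also have "4*B - 3*A = arctan_comb_numer mu s"
    unfolding arctan_comb_numer_def A_def B_def by (simp add: power2_eq_square algebra_simps)
  finally have "2 * inverse A - 3/2 * inverse B = arctan_comb_numer mu s / (2*A*B)" .
  moreover have "(arctan_comb mu has_real_derivative 2 * inverse A - 3/2 * inverse B) (at s)"
    unfolding arctan_comb_def A_def B_def by (rule derivative_eq_intros refl | simp)+
  ultimately show ?thesis
    unfolding A_def B_def by simp
qed

lemma arctan_comb_deriv_denom_pos: "0 < 2 * (1 + (mu + 2*s)^2) * (1 + (mu + s)^2 :: real)"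
  by (simp add: add_pos_nonneg)

text \<open>This identity is why \<open>P(s)/s\<close> is strictly decreasing on \<open>s > 0\<close>.\<close>

lemma arctan_comb_numer_cross:
  "arctan_comb_numer mu a * s - arctan_comb_numer mu s * a = (s - a) * (1 + mu^2 + 8*a*s)"
  unfolding arctan_comb_numer_def by (simp add: algebra_simps power2_eq_square)

lemma arctan_comb_numer_pos_below:
  assumes "0 < s" "s \<le> a" "0 < arctan_comb_numer mu a"
  shows "0 < arctan_comb_numer mu s"
proof -
  have "(s - a) * (1 + mu^2 + 8*a*s) \<le> 0"
    using assms by (intro mult_nonpos_nonneg) (simp_all add: add_pos_nonneg)
  then have "arctan_comb_numer mu a * s \<le> arctan_comb_numer mu s * a"
    using arctan_comb_numer_cross[of mu a s] by linarith
  moreover have "0 < arctan_comb_numer mu a * s"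
    using assms by simp
  ultimately have "0 < arctan_comb_numer mu s * a"
    by linarith
  then show ?thesis
    using \<open>0 < s\<close> \<open>s \<le> a\<close> by (simp add: zero_less_mult_iff)
qed

lemma arctan_comb_numer_neg_above:
  assumes "0 < a" "a < s" "arctan_comb_numer mu a \<le> 0"
  shows "arctan_comb_numer mu s < 0"
proof -
  have "0 < (s - a) * (1 + mu^2 + 8*a*s)"
    using assms by (intro mult_pos_pos) (simp_all add: add_pos_nonneg)
  then have "arctan_comb_numer mu s * a < arctan_comb_numer mu a * s"
    using arctan_comb_numer_cross[of mu a s] by linarith
  moreover have "arctan_comb_numer mu a * s \<le> 0"
    using assms by (simp add: mult_nonpos_nonneg)
  ultimately have "arctan_comb_numer mu s * a < 0"
    by linarith
  then show ?thesis
    using \<open>0 < a\<close> by (simp add: mult_less_0_iff)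
qed

lemma arctan_comb_strict_mono_below:
  assumes "0 < x" "x < y" "0 < arctan_comb_numer mu y"
  shows "arctan_comb mu x < arctan_comb mu y"
proof (rule DERIV_pos_imp_increasing[OF \<open>x < y\<close>])
  fix s assume "x \<le> s" "s \<le> y"
  then have "0 < arctan_comb_numer mu s"
    using assms by (intro arctan_comb_numer_pos_below[of s y]) simp_all
  then show "\<exists>D. (arctan_comb mu has_real_derivative D) (at s) \<and> 0 < D"
    using arctan_comb_deriv arctan_comb_deriv_denom_pos by (blast intro: divide_pos_pos)
qed

lemma arctan_comb_strict_antimono_above:
  assumes "0 < x" "x < y" "arctan_comb_numer mu x \<le> 0"
  shows "arctan_comb mu y < arctan_comb mu x"
proof (rule DERIV_neg_imp_decreasing_open[OF \<open>x < y\<close>])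
  fix s assume "x < s" "s < y"
  then have "arctan_comb_numer mu s < 0"
    using assms by (intro arctan_comb_numer_neg_above[of x s]) simp_all
  then show "\<exists>D. (arctan_comb mu has_real_derivative D) (at s) \<and> D < 0"
    using arctan_comb_deriv arctan_comb_deriv_denom_pos by (blast intro: divide_neg_pos)
next
  show "continuous_on {x..y} (arctan_comb mu)"
    unfolding arctan_comb_def by (intro continuous_intros)
qed

lemma arctan_comb_halving:
  assumes "0 < a" "arctan_comb mu a \<le> arctan_comb mu (2*a)"
  shows "arctan_comb mu (a/2) < arctan_comb mu a"
proof -
  have "0 < arctan_comb_numer mu a"
    using arctan_comb_strict_antimono_above[of a "2*a" mu] assms by fastforce
  then show ?thesis
    using arctan_comb_strict_mono_below[of "a/2" a mu] assms by simp
qed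

lemma F1_three_halves_iff:
  assumes "0 < lam * t"
  shows "3/2 \<le> F1 lam mu t \<longleftrightarrow> arctan_comb mu (lam*t/4) \<le> arctan_comb mu (lam*t/2)"
    and "3/2 < F1 lam mu t \<longleftrightarrow> arctan_comb mu (lam*t/4) < arctan_comb mu (lam*t/2)"
proof -
  define d where "d = arctan (lam*t/2 + mu) - arctan (lam*t/4 + mu)"
  have "0 < d"
    using assms by (simp add: d_def arctan_less_iff)
  then have "F1 lam mu t - 3/2 = (arctan_comb mu (lam*t/2) - arctan_comb mu (lam*t/4)) / d"
    unfolding F1_def arctan_comb_def d_def by (simp add: field_simps)
  with \<open>0 < d\<close> show
    "3/2 \<le> F1 lam mu t \<longleftrightarrow> arctan_comb mu (lam*t/4) \<le> arctan_comb mu (lam*t/2)"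
    "3/2 < F1 lam mu t \<longleftrightarrow> arctan_comb mu (lam*t/4) < arctan_comb mu (lam*t/2)"
    by (smt (verit) zero_le_divide_iff zero_less_divide_iff)+
qed

lemma F2_eq:
  assumes "0 < t" "0 < nu"
  shows "F2 nu t = (t/2 + 2*nu) / (t + nu)"
proof -
  have "1 / (t/2 + nu) - 1 / (t + nu) = (t/2) / ((t/2 + nu) * (t + nu))"
   and "1 / (t/4 + nu) - 1 / (t/2 + nu) = (t/4) / ((t/4 + nu) * (t/2 + nu))"
    using assms by (simp_all add: field_simps)
  then show ?thesis
    using assms unfolding F2_def by (simp add: divide_simps) (simp add: algebra_simps)
qed

lemma F2_three_halves_iff:
  assumes "0 < t" "0 < nu"
  shows "3/2 \<le> F2 nu t \<longleftrightarrow> 2*t \<le> nu"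
    and "3/2 < F2 nu t \<longleftrightarrow> 2*t < nu"
  using assms by (simp_all add: F2_eq le_divide_eq less_divide_eq)

theorem corollary3p2:
  fixes lam nu mu t :: real
  assumes "lam > 0" and "nu > 0" and "t > 0"
  shows "(F1 lam mu t \<ge> 3/2 \<longrightarrow> F1 lam mu (t/2) > 3/2) \<and>
         (F2 nu t \<ge> 3/2 \<longrightarrow> F2 nu (t/2) > 3/2)"
proof (intro conjI impI)
  have "0 < lam * t" "0 < lam * (t/2)"
    using assms by simp_all
  assume "3/2 \<le> F1 lam mu t"
  then have "arctan_comb mu (lam*t/4) \<le> arctan_comb mu (2 * (lam*t/4))"
    using F1_three_halves_iff(1)[OF \<open>0 < lam * t\<close>] by simp
  then have "arctan_comb mu (lam*t/4 / 2) < arctan_comb mu (lam*t/4)"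
    using \<open>0 < lam * t\<close> by (intro arctan_comb_halving) simp_all
  then show "3/2 < F1 lam mu (t/2)"
    using F1_three_halves_iff(2)[OF \<open>0 < lam * (t/2)\<close>] by simp
next
  assume "3/2 \<le> F2 nu t"
  then have "2*t \<le> nu"
    using F2_three_halves_iff(1) assms by blast
  then show "3/2 < F2 nu (t/2)"
    using F2_three_halves_iff(2)[of "t/2" nu] assms by simp
qed

end
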